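(* Let $\alpha\ge 4$, let $(x,y)$ be an optimal solution of the LP-relaxation, and let $N'$ and the clusters $M_l$ ($l\in N'$) be produced by the clustering procedure below. Then for every $l\in N'$, $Z_l:=\sum_{j\in M_l}y_j\ge\frac{\alpha-1}{\alpha}$.
   Context: Setting: finite set $N$ of locations, capacity $M>0$, demands $d_j\ge0$, integer $k\ge1$, metric costs $c_{ij}$ on $N$ (nonnegative, $c_{ii}=0$, symmetric, triangle inequality). LP-relaxation: minimize $\sum_{i,j}d_jc_{ij}x_{ij}$ s.t. $\sum_{i}x_{ij}=1$ ($j\in N$), $\sum_j d_jx_{ij}\le My_i$ ($i\in N$), $\sum_i y_i\le k$, $0\le x_{ij}\le y_i$, $0\le y_i\le1$. For $j\in N$ let $C_j=\sum_{i\in N}c_{ij}x_{ij}$. Clustering procedure: order the locations as $1,\dots,n$ so that $C_1\le\dots\le C_n$ (ties arbitrary); start with $N'=\emptyset$; for $j=1,\dots,n$ in turn, if there is no $l\in N'$ with $c_{lj}\le 2\alpha C_j$, add $j$ to $N'$. Then for each $j\in N$ let $N'(j)$ be a closest element of $N'$ to $j$ (ties arbitrary), and set $M_l=\{j\in N: N'(j)=l\}$ for $l\in N'$. *)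

theory Defs
  imports Complex_Main
begin

definition metric_costs :: "'a set \<Rightarrow> ('a \<Rightarrow> 'a \<Rightarrow> real) \<Rightarrow> bool" where
  "metric_costs N c \<longleftrightarrow>
     (\<forall>i\<in>N. \<forall>j\<in>N. c i j \<ge> 0) \<and> (\<forall>i\<in>N. c i i = 0) \<and>
     (\<forall>i\<in>N. \<forall>j\<in>N. c i j = c j i) \<and>
     (\<forall>i\<in>N. \<forall>j\<in>N. \<forall>l\<in>N. c i l \<le> c i j + c j l)"

text \<open>Feasibility for the LP-relaxation (x i j = fraction of demand of j served at i).\<close>
definition lp_feasible :: "'a set \<Rightarrow> ('a \<Rightarrow> real) \<Rightarrow> real \<Rightarrow> nat \<Rightarrow>
    ('a \<Rightarrow> 'a \<Rightarrow> real) \<Rightarrow> ('a \<Rightarrow> real) \<Rightarrow> bool" where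
  "lp_feasible N d M k x y \<longleftrightarrow>
     (\<forall>j\<in>N. (\<Sum>i\<in>N. x i j) = 1) \<and>
     (\<forall>i\<in>N. (\<Sum>j\<in>N. d j * x i j) \<le> M * y i) \<and>
     (\<Sum>i\<in>N. y i) \<le> real k \<and>
     (\<forall>i\<in>N. \<forall>j\<in>N. 0 \<le> x i j \<and> x i j \<le> y i) \<and>
     (\<forall>i\<in>N. 0 \<le> y i \<and> y i \<le> 1)"

definition lp_cost :: "'a set \<Rightarrow> ('a \<Rightarrow> real) \<Rightarrow> ('a \<Rightarrow> 'a \<Rightarrow> real) \<Rightarrow>
    ('a \<Rightarrow> 'a \<Rightarrow> real) \<Rightarrow> real" where
  "lp_cost N d c x = (\<Sum>i\<in>N. \<Sum>j\<in>N. d j * c i j * x i j)"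

definition lp_optimal :: "'a set \<Rightarrow> ('a \<Rightarrow> real) \<Rightarrow> real \<Rightarrow> nat \<Rightarrow> ('a \<Rightarrow> 'a \<Rightarrow> real) \<Rightarrow>
    ('a \<Rightarrow> 'a \<Rightarrow> real) \<Rightarrow> ('a \<Rightarrow> real) \<Rightarrow> bool" where
  "lp_optimal N d M k c x y \<longleftrightarrow> lp_feasible N d M k x y \<and>
     (\<forall>x' y'. lp_feasible N d M k x' y' \<longrightarrow> lp_cost N d c x \<le> lp_cost N d c x')"

definition Cval :: "'a set \<Rightarrow> ('a \<Rightarrow> 'a \<Rightarrow> real) \<Rightarrow> ('a \<Rightarrow> 'a \<Rightarrow> real) \<Rightarrow> 'a \<Rightarrow> real" where
  "Cval N c x j = (\<Sum>i\<in>N. c i j * x i j)"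

fun cluster_centres :: "('a \<Rightarrow> 'a \<Rightarrow> real) \<Rightarrow> real \<Rightarrow> ('a \<Rightarrow> real) \<Rightarrow> 'a set \<Rightarrow> 'a list \<Rightarrow> 'a set" where
  "cluster_centres c \<alpha> C S [] = S"
| "cluster_centres c \<alpha> C S (j # js) =
     cluster_centres c \<alpha> C (if \<exists>l\<in>S. c l j \<le> 2 * \<alpha> * C j then S else insert j S) js"

end

theory Submission
  imports Defs
begin

text \<open>Fix a centre l and let B be the ball of radius \<alpha> C_l around it. Since C_l is the mean
  distance to l under the unit mass x_{.l}, Markov's inequality leaves at most 1/\<alpha> of that
  mass outside B, so x \<le> y gives a y-mass of at least 1 - 1/\<alpha> on B. Every i in B is assigned
  to l: its nearest centre l' satisfies c l l' \<le> 2 c i l \<le> 2 \<alpha> C_l, whereas the greedy procedure,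
  run in order of increasing C, keeps any two centres more than 2 \<alpha> max C_l C_l' apart.
  Only feasibility of (x, y) and \<alpha> > 0 are needed.\<close>

lemma markov_sum:
  fixes f w :: "'a \<Rightarrow> real"
  assumes "finite A" "\<forall>i\<in>A. 0 \<le> f i" "\<forall>i\<in>A. 0 \<le> w i"
  shows "t * (\<Sum>i\<in>{i\<in>A. t < f i}. w i) \<le> (\<Sum>i\<in>A. f i * w i)"
proof -
  have "t * (\<Sum>i\<in>{i\<in>A. t < f i}. w i) = (\<Sum>i\<in>{i\<in>A. t < f i}. t * w i)"
    by (rule sum_distrib_left)
  also have "\<dots> \<le> (\<Sum>i\<in>{i\<in>A. t < f i}. f i * w i)"
    using assms(3) by (intro sum_mono mult_right_mono) auto
  also have "\<dots> \<le> (\<Sum>i\<in>A. f i * w i)"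
    using assms by (intro sum_mono2) auto
  finally show ?thesis .
qed

lemma markov_sum_tail_le_inverse:
  fixes \<alpha> :: real
  assumes "finite A" "\<forall>i\<in>A. 0 \<le> f i" "\<forall>i\<in>A. 0 \<le> w i" "\<alpha> > 0"
  shows "(\<Sum>i\<in>{i\<in>A. \<alpha> * (\<Sum>j\<in>A. f j * w j) < f i}. w i) \<le> 1 / \<alpha>"
proof -
  define E where "E = (\<Sum>j\<in>A. f j * w j)"
  have "E \<ge> 0"
    unfolding E_def using assms by (intro sum_nonneg) auto
  then consider "E = 0" | "E > 0" by linarith
  then show ?thesis
  proof cases
    case 1
    have "\<forall>i\<in>A. f i * w i = 0"
      using 1 assms(1-3) sum_nonneg_eq_0_iff[of A "\<lambda>i. f i * w i"] unfolding E_def by simp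
    then have "\<forall>i\<in>{i\<in>A. 0 < f i}. w i = 0" by auto
    then show ?thesis using 1 \<open>\<alpha> > 0\<close> unfolding E_def by simp
  next
    case 2
    have "(\<alpha> * E) * (\<Sum>i\<in>{i\<in>A. \<alpha> * E < f i}. w i) \<le> E"
      unfolding E_def using markov_sum[OF assms(1-3)] by blast
    then have "\<alpha> * (\<Sum>i\<in>{i\<in>A. \<alpha> * E < f i}. w i) \<le> 1"
      using 2 by (simp add: mult.assoc mult_le_cancel_left1)
    then show ?thesis
      using \<open>\<alpha> > 0\<close> unfolding E_def by (simp add: pos_le_divide_eq mult.commute)
  qed
qed

lemma cluster_centres_append:
  "cluster_centres c \<alpha> C S (xs @ ys) = cluster_centres c \<alpha> C (cluster_centres c \<alpha> C S xs) ys"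
  by (induction xs arbitrary: S) auto

lemma cluster_centres_subset: "cluster_centres c \<alpha> C S js \<subseteq> S \<union> set js"
proof (induction js arbitrary: S)
  case (Cons j js)
  then show ?case by (simp; blast)
qed simp

lemma cluster_centres_far_from_earlier:
  assumes "distinct (xs @ b # ys)" "a \<in> set xs"
    and "a \<in> cluster_centres c \<alpha> C {} (xs @ b # ys)"
    and "b \<in> cluster_centres c \<alpha> C {} (xs @ b # ys)"
  shows "2 * \<alpha> * C b < c a b"
proof -
  define S where "S = cluster_centres c \<alpha> C {} xs"
  define S' where "S' = (if \<exists>l\<in>S. c l b \<le> 2 * \<alpha> * C b then S else insert b S)"
  have centres: "cluster_centres c \<alpha> C {} (xs @ b # ys) = cluster_centres c \<alpha> C S' ys"
    by (simp add: cluster_centres_append S_def S'_def)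
  have "S \<subseteq> set xs"
    using cluster_centres_subset[of c \<alpha> C "{}" xs] S_def by auto
  moreover have "a \<in> S' \<union> set ys" "b \<in> S' \<union> set ys"
    using assms(3,4) cluster_centres_subset[of c \<alpha> C S' ys] centres by auto
  ultimately have "a \<in> S" "b \<in> S'" "b \<notin> S"
    using assms(1,2) unfolding S'_def by (auto split: if_splits)
  then show ?thesis unfolding S'_def by (auto split: if_splits)
qed

lemma cluster_centres_separated:
  assumes "distinct js" "sorted (map C js)" "\<alpha> \<ge> 0"
    and "\<forall>i\<in>set js. \<forall>j\<in>set js. c i j = c j i"
    and a: "a \<in> cluster_centres c \<alpha> C {} js" and b: "b \<in> cluster_centres c \<alpha> C {} js"
    and "a \<noteq> b"
  shows "2 * \<alpha> * C a < c a b"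
proof -
  have "a \<in> set js" "b \<in> set js"
    using a b cluster_centres_subset[of c \<alpha> C "{}" js] by auto
  then obtain xs ys where js: "js = xs @ a # ys" by (meson split_list)
  show ?thesis
  proof (cases "b \<in> set xs")
    case True
    then obtain us vs where "js = (us @ b # vs) @ a # ys"
      using js split_list[of b xs] by auto
    then have "2 * \<alpha> * C a < c b a"
      using assms(1) a b cluster_centres_far_from_earlier[of "us @ b # vs" a ys] by auto
    then show ?thesis using assms(4) \<open>a \<in> set js\<close> \<open>b \<in> set js\<close> by auto
  next
    case False
    then have "b \<in> set ys" using \<open>b \<in> set js\<close> \<open>a \<noteq> b\<close> js by auto
    then obtain us vs where js': "js = (xs @ a # us) @ b # vs"
      using js split_list[of b ys] by auto
    then have "2 * \<alpha> * C b < c a b"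
      using assms(1) a b cluster_centres_far_from_earlier[of "xs @ a # us" b vs] by auto
    moreover have "C a \<le> C b"
      using assms(2) js' by (auto simp: sorted_append)
    ultimately show ?thesis
      using \<open>\<alpha> \<ge> 0\<close> by (smt (verit) mult_left_mono)
  qed
qed

lemma assigned_to_centre_within_ball:
  assumes "metric_costs N c" "R \<subseteq> N" "l \<in> R" "i \<in> N"
    and nearest: "\<forall>j\<in>N. assign j \<in> R \<and> (\<forall>l\<in>R. c (assign j) j \<le> c l j)"
    and separated: "\<forall>a\<in>R. \<forall>b\<in>R. a \<noteq> b \<longrightarrow> 2 * \<alpha> * C a < c a b"
    and "c i l \<le> \<alpha> * C l"
  shows "assign i = l"
proof (rule ccontr)
  assume "assign i \<noteq> l"
  have "assign i \<in> N" using nearest assms(2,4) by blast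
  then have "c l (assign i) \<le> c l i + c (assign i) i"
    using assms(1-4) unfolding metric_costs_def by (metis subsetD)
  also have "\<dots> \<le> 2 * c i l"
    using nearest assms(1-4) unfolding metric_costs_def by (metis mult_2 subsetD add_left_mono)
  also have "\<dots> \<le> 2 * \<alpha> * C l" using \<open>c i l \<le> \<alpha> * C l\<close> by simp
  finally show False
    using separated assms(3) nearest assms(4) \<open>assign i \<noteq> l\<close> by force
qed

theorem lemma1:
  fixes N :: "'a set" and d :: "'a \<Rightarrow> real" and M :: real and k :: nat
    and c :: "'a \<Rightarrow> 'a \<Rightarrow> real" and \<alpha> :: real
    and x :: "'a \<Rightarrow> 'a \<Rightarrow> real" and y :: "'a \<Rightarrow> real"
    and ord :: "'a list" and assign :: "'a \<Rightarrow> 'a"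
  assumes "finite N" and "M > 0" and "\<forall>j\<in>N. d j \<ge> 0" and "k \<ge> 1"
    and "metric_costs N c"
    and "\<alpha> \<ge> 4"
    and "lp_optimal N d M k c x y"
    and "distinct ord" and "set ord = N" and "sorted (map (Cval N c x) ord)"
    and "\<forall>j\<in>N. assign j \<in> cluster_centres c \<alpha> (Cval N c x) {} ord \<and>
           (\<forall>l\<in>cluster_centres c \<alpha> (Cval N c x) {} ord. c l j \<ge> c (assign j) j)"
  shows "\<forall>l\<in>cluster_centres c \<alpha> (Cval N c x) {} ord.
           (\<Sum>j\<in>{j\<in>N. assign j = l}. y j) \<ge> (\<alpha> - 1) / \<alpha>"
proof
  let ?C = "Cval N c x" and ?R = "cluster_centres c \<alpha> (Cval N c x) {} ord"
  fix l assume "l \<in> ?R"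
  have "?R \<subseteq> N" using cluster_centres_subset[of c \<alpha> ?C "{}" ord] assms(9) by auto
  with \<open>l \<in> ?R\<close> have "l \<in> N" by blast
  have feasible: "lp_feasible N d M k x y" using assms(7) unfolding lp_optimal_def by blast
  have "\<forall>a\<in>?R. \<forall>b\<in>?R. a \<noteq> b \<longrightarrow> 2 * \<alpha> * ?C a < c a b"
    using cluster_centres_separated[OF assms(8,10)] assms(5,6,9) unfolding metric_costs_def by auto
  then have ball_in_cluster: "{i\<in>N. \<not> \<alpha> * ?C l < c i l} \<subseteq> {j\<in>N. assign j = l}"
    using assigned_to_centre_within_ball[OF assms(5) \<open>?R \<subseteq> N\<close> \<open>l \<in> ?R\<close>] assms(11) by force
  have "(\<Sum>i\<in>{i\<in>N. \<alpha> * ?C l < c i l}. x i l) \<le> 1 / \<alpha>"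
    using markov_sum_tail_le_inverse[OF assms(1), of "\<lambda>i. c i l" "\<lambda>i. x i l" \<alpha>]
      assms(5,6) feasible \<open>l \<in> N\<close> unfolding metric_costs_def lp_feasible_def Cval_def by auto
  moreover have "(\<Sum>i\<in>N. x i l) = 1" using feasible \<open>l \<in> N\<close> unfolding lp_feasible_def by blast
  moreover have "(\<Sum>i\<in>N. x i l) = (\<Sum>i\<in>{i\<in>N. \<not> \<alpha> * ?C l < c i l}. x i l)
      + (\<Sum>i\<in>{i\<in>N. \<alpha> * ?C l < c i l}. x i l)"
    using assms(1) by (subst sum.union_disjoint[symmetric]) (auto intro: sum.cong)
  ultimately have "(\<alpha> - 1) / \<alpha> \<le> (\<Sum>i\<in>{i\<in>N. \<not> \<alpha> * ?C l < c i l}. x i l)"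
    using assms(6) by (simp add: diff_divide_distrib)
  also have "\<dots> \<le> (\<Sum>i\<in>{i\<in>N. \<not> \<alpha> * ?C l < c i l}. y i)"
    using feasible \<open>l \<in> N\<close> unfolding lp_feasible_def by (intro sum_mono) auto
  also have "\<dots> \<le> (\<Sum>j\<in>{j\<in>N. assign j = l}. y j)"
    using ball_in_cluster feasible assms(1) unfolding lp_feasible_def by (intro sum_mono2) auto
  finally show "(\<Sum>j\<in>{j\<in>N. assign j = l}. y j) \<ge> (\<alpha> - 1) / \<alpha>" .
qed

end
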